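(* A $4$-dimensional $pp$-wave $g_{ppw}=2\,du\,dv+H(u,x_1,x_2)\,du^2+dx_1^2+dx_2^2$ is (locally) isotropically conformally Einstein if and only if its Weyl tensor is harmonic, $\operatorname{div}W=0$.
   Context: A Lorentzian metric $g$ is isotropically conformally Einstein if (locally) there is a smooth function $f$ with $\nabla f$ nowhere zero and null, $g(\nabla f,\nabla f)=0$, such that $e^{-f}g$ is an Einstein metric; equivalently, $\operatorname{Hes}_f+\rho+\frac12 df\otimes df=\lambda g$ for some function $\lambda$ (quasi-Einstein equation with $\mu=-\frac12$), where $\rho$ is the Ricci tensor and $\operatorname{Hes}_f=\nabla df$. $W$ denotes the Weyl conformal curvature tensor and $\operatorname{div}W(X,Y,Z)=-\frac12\{(\nabla_X\rho)(Y,Z)-(\nabla_Y\rho)(X,Z)\}+\frac1{12}\{X(\tau)g(Y,Z)-Y(\tau)g(X,Z)\}$ with $\tau$ the scalar curvature. *)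

theory Defs
  imports "HOL-Analysis.Analysis"
begin

text \<open>Coordinates (u, v, x1, x2) on the 4-dimensional spacetime and (u, x1, x2) on the
  domain of the profile function H.\<close>

datatype coord = U | V | X1 | X2
datatype coord3 = U3 | X13 | X23

lemma UNIV_coord: "(UNIV :: coord set) = {U, V, X1, X2}"
  using coord.exhaust by auto

lemma UNIV_coord3: "(UNIV :: coord3 set) = {U3, X13, X23}"
  using coord3.exhaust by auto

instance coord :: finite
  by standard (simp add: UNIV_coord)

instance coord3 :: finite
  by standard (simp add: UNIV_coord3)

definition pd :: "'n::finite \<Rightarrow> (real^'n \<Rightarrow> real) \<Rightarrow> real^'n \<Rightarrow> real" where
  "pd i F p = deriv (\<lambda>t. F (p + t *\<^sub>R axis i 1)) 0"

fun pds :: "'n::finite list \<Rightarrow> (real^'n \<Rightarrow> real) \<Rightarrow> real^'n \<Rightarrow> real" where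
  "pds [] F = F"
| "pds (i # is) F = pd i (pds is F)"

definition Cinf_on :: "(real^'n::finite) set \<Rightarrow> (real^'n \<Rightarrow> real) \<Rightarrow> bool" where
  "Cinf_on S F \<longleftrightarrow> (\<forall>is. pds is F differentiable_on S)"

type_synonym 'n metric = "real^'n \<Rightarrow> real^'n^'n"

definition ginv :: "'n::finite metric \<Rightarrow> real^'n \<Rightarrow> real^'n^'n" where
  "ginv g p = matrix_inv (g p)"

definition chr :: "'n::finite metric \<Rightarrow> 'n \<Rightarrow> 'n \<Rightarrow> 'n \<Rightarrow> real^'n \<Rightarrow> real" where
  "chr g k i j p = (1/2) * (\<Sum>l\<in>UNIV. ginv g p $ k $ l *
      (pd i (\<lambda>q. g q $ j $ l) p + pd j (\<lambda>q. g q $ i $ l) p - pd l (\<lambda>q. g q $ i $ j) p))"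

definition ricci :: "'n::finite metric \<Rightarrow> 'n \<Rightarrow> 'n \<Rightarrow> real^'n \<Rightarrow> real" where
  "ricci g i j p = (\<Sum>k\<in>UNIV. pd k (chr g k i j) p - pd j (chr g k i k) p
      + (\<Sum>l\<in>UNIV. chr g k k l p * chr g l i j p - chr g k j l p * chr g l i k p))"

definition scal :: "'n::finite metric \<Rightarrow> real^'n \<Rightarrow> real" where
  "scal g p = (\<Sum>i\<in>UNIV. \<Sum>j\<in>UNIV. ginv g p $ i $ j * ricci g i j p)"

definition hess :: "'n::finite metric \<Rightarrow> (real^'n \<Rightarrow> real) \<Rightarrow> 'n \<Rightarrow> 'n \<Rightarrow> real^'n \<Rightarrow> real" where
  "hess g f i j p = pd i (pd j f) p - (\<Sum>k\<in>UNIV. chr g k i j p * pd k f p)"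

definition cov_ricci :: "'n::finite metric \<Rightarrow> 'n \<Rightarrow> 'n \<Rightarrow> 'n \<Rightarrow> real^'n \<Rightarrow> real" where
  "cov_ricci g k i j p = pd k (ricci g i j) p
      - (\<Sum>l\<in>UNIV. chr g l k i p * ricci g l j p + chr g l k j p * ricci g i l p)"

text \<open>Divergence of the Weyl tensor (4-dimensional formula from the paper).\<close>
definition divW :: "'n::finite metric \<Rightarrow> 'n \<Rightarrow> 'n \<Rightarrow> 'n \<Rightarrow> real^'n \<Rightarrow> real" where
  "divW g i j k p = - (1/2) * (cov_ricci g i j k p - cov_ricci g j i k p)
      + (1/12) * (pd i (scal g) p * g p $ j $ k - pd j (scal g) p * g p $ i $ k)"

definition grad :: "'n::finite metric \<Rightarrow> (real^'n \<Rightarrow> real) \<Rightarrow> real^'n \<Rightarrow> real^'n" where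
  "grad g f p = ginv g p *v (\<chi> i. pd i f p)"

definition gval :: "'n::finite metric \<Rightarrow> real^'n \<Rightarrow> real^'n \<Rightarrow> real^'n \<Rightarrow> real" where
  "gval g p X Y = (\<Sum>i\<in>UNIV. \<Sum>j\<in>UNIV. g p $ i $ j * X $ i * Y $ j)"

text \<open>Locally isotropically conformally Einstein on Omega: around every point of Omega there is
  a smooth f with nowhere-zero null gradient solving the quasi-Einstein equation with mu = -1/2.\<close>
definition loc_iso_conf_einstein :: "'n::finite metric \<Rightarrow> (real^'n) set \<Rightarrow> bool" where
  "loc_iso_conf_einstein g \<Omega> \<longleftrightarrow>
    (\<forall>p\<in>\<Omega>. \<exists>W f lam. open W \<and> p \<in> W \<and> W \<subseteq> \<Omega> \<and> Cinf_on W f \<and>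
       (\<forall>q\<in>W. grad g f q \<noteq> 0 \<and> gval g q (grad g f q) (grad g f q) = 0 \<and>
          (\<forall>i j. hess g f i j q + ricci g i j q + (1/2) * pd i f q * pd j f q
                 = lam q * g q $ i $ j)))"

definition harmonic_weyl :: "'n::finite metric \<Rightarrow> (real^'n) set \<Rightarrow> bool" where
  "harmonic_weyl g \<Omega> \<longleftrightarrow> (\<forall>p\<in>\<Omega>. \<forall>i j k. divW g i j k p = 0)"

definition proj3 :: "real^coord \<Rightarrow> real^coord3" where
  "proj3 p = (\<chi> c. case c of U3 \<Rightarrow> p $ U | X13 \<Rightarrow> p $ X1 | X23 \<Rightarrow> p $ X2)"

definition ppw :: "(real^coord3 \<Rightarrow> real) \<Rightarrow> coord metric" where
  "ppw H p = (\<chi> i j. if i = U \<and> j = U then H (proj3 p)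
      else if (i = U \<and> j = V) \<or> (i = V \<and> j = U) then 1
      else if (i = X1 \<and> j = X1) \<or> (i = X2 \<and> j = X2) then 1 else 0)"

end

theory Submission
  imports Defs
begin

text \<open>For a pp-wave the only nonzero Ricci component is \<open>\<rho>\<^sub>u\<^sub>u = -(H\<^sub>1\<^sub>1 + H\<^sub>2\<^sub>2)/2\<close> and \<open>\<tau> = 0\<close>,
  so \<open>div W = 0\<close> exactly when \<open>\<rho>\<^sub>u\<^sub>u\<close> does not depend on the transverse coordinates.

  Necessity: differentiating the null condition \<open>g(\<nabla>f, \<nabla>f) = 0\<close> and inserting the
  quasi-Einstein equation forces \<open>\<lambda> = 0\<close> and \<open>\<rho>\<^sub>u\<^sub>u \<partial>\<^sub>v f = 0\<close>. Where \<open>\<partial>\<^sub>v f \<noteq> 0\<close> this kills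
  \<open>\<partial>\<^sub>x \<rho>\<^sub>u\<^sub>u\<close> at once; where \<open>\<partial>\<^sub>v f = 0\<close> the whole gradient of f points along \<open>\<partial>\<^sub>v\<close> and the
  symmetry of the third derivatives of f does.

  Sufficiency: if \<open>\<rho>\<^sub>u\<^sub>u = \<rho>(u)\<close>, a potential \<open>f = F(u)\<close> works as soon as
  \<open>F'' + F'\<^sup>2/2 + \<rho> = 0\<close> with \<open>F' \<noteq> 0\<close>. This Riccati equation is linearised by \<open>F = 2 ln y\<close>
  into \<open>y'' = -\<rho> y / 2\<close>, which is solved locally by Picard iteration.\<close>

section \<open>Partial derivatives\<close>

lemma pd_eq_derivative:
  assumes "(G has_derivative G') (at p)"
  shows "pd i G p = G' (axis i 1)"
proof -
  have lin: "linear G'" using assms has_derivative_linear by blast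
  have line: "((\<lambda>t::real. p + t *\<^sub>R axis i 1) has_derivative (\<lambda>t. t *\<^sub>R axis i 1)) (at 0)"
    by (auto intro!: derivative_eq_intros)
  have "((\<lambda>t. G (p + t *\<^sub>R axis i 1)) has_derivative (\<lambda>t. G' (t *\<^sub>R axis i 1))) (at 0)"
    using diff_chain_at[OF line, of G G'] assms by (simp add: o_def)
  moreover have "(\<lambda>t. G' (t *\<^sub>R axis i 1)) = (*) (G' (axis i 1))"
    using lin by (auto simp: linear_scale fun_eq_iff)
  ultimately have "((\<lambda>t. G (p + t *\<^sub>R axis i 1)) has_field_derivative G' (axis i 1)) (at 0)"
    by (simp add: has_field_derivative_def)
  then show ?thesis unfolding pd_def by (rule DERIV_imp_deriv)
qed

lemma pd_const [simp]: "pd i (\<lambda>q. c) p = 0"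
  unfolding pd_def by simp

lemma sum_axis_mult [simp]: "(\<Sum>k\<in>UNIV. axis i (1::real) $ k * F k) = F i"
  by (simp add: axis_def if_distrib[of "\<lambda>x. x * F _"] cong: if_cong)

lemma has_derivative_partials:
  fixes G :: "real^'n::finite \<Rightarrow> real"
  assumes "G differentiable (at p)"
  shows "(G has_derivative (\<lambda>h. \<Sum>i\<in>UNIV. h $ i * pd i G p)) (at p)"
proof -
  obtain L where L: "(G has_derivative L) (at p)" using assms differentiable_def by blast
  have lin: "linear L" using L has_derivative_linear by blast
  have "L h = (\<Sum>i\<in>UNIV. h $ i * pd i G p)" for h
  proof -
    have "L h = L (\<Sum>i\<in>UNIV. h $ i *\<^sub>R axis i 1)"
      using basis_expansion[of h] by (simp add: scalar_mult_eq_scaleR)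
    also have "\<dots> = (\<Sum>i\<in>UNIV. h $ i * L (axis i 1))"
      using lin by (simp add: linear_sum linear_scale)
    finally show ?thesis using pd_eq_derivative[OF L] by simp
  qed
  then have "L = (\<lambda>h. \<Sum>i\<in>UNIV. h $ i * pd i G p)" by auto
  then show ?thesis using L by simp
qed

lemma pd_cmult:
  assumes "G differentiable (at p)"
  shows "pd i (\<lambda>q. c * G q) p = c * pd i G p"
  by (subst pd_eq_derivative[of _ "\<lambda>h. c * (\<Sum>i\<in>UNIV. h $ i * pd i G p)"])
     (auto intro!: derivative_eq_intros has_derivative_partials[OF assms])

lemma pd_cong_open:
  assumes "open S" "x \<in> S" "\<And>y. y \<in> S \<Longrightarrow> F y = G y"
  shows "pd i F x = pd i G x"
proof -
  let ?T = "(\<lambda>t::real. x + t *\<^sub>R axis i 1) -` S"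
  have "open ?T" using assms(1) by (intro continuous_open_vimage) (auto intro!: continuous_intros)
  moreover have "0 \<in> ?T" using assms(2) by simp
  ultimately have "eventually (\<lambda>t. t \<in> ?T) (nhds 0)" by (rule eventually_nhds_in_open)
  then have "eventually (\<lambda>t. F (x + t *\<^sub>R axis i 1) = G (x + t *\<^sub>R axis i 1)) (nhds 0)"
    by eventually_elim (use assms(3) in auto)
  then show ?thesis unfolding pd_def by (rule deriv_cong_ev) simp
qed

lemma has_real_derivative_along:
  fixes G :: "real^'n::finite \<Rightarrow> real"
  assumes "G differentiable (at (x + s *\<^sub>R v))"
  shows "((\<lambda>t. G (x + t *\<^sub>R v)) has_real_derivative (\<Sum>i\<in>UNIV. v $ i * pd i G (x + s *\<^sub>R v))) (at s)"
proof -
  have line: "((\<lambda>t::real. x + t *\<^sub>R v) has_derivative (\<lambda>t. t *\<^sub>R v)) (at s)"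
    by (auto intro!: derivative_eq_intros)
  have "((\<lambda>t. G (x + t *\<^sub>R v)) has_derivative
      (\<lambda>t. \<Sum>k\<in>UNIV. (t *\<^sub>R v) $ k * pd k G (x + s *\<^sub>R v))) (at s)"
    using diff_chain_at[OF line has_derivative_partials[OF assms]] by (simp add: o_def)
  moreover have "(\<lambda>t. \<Sum>k\<in>UNIV. (t *\<^sub>R v) $ k * pd k G (x + s *\<^sub>R v))
     = (*) (\<Sum>i\<in>UNIV. v $ i * pd i G (x + s *\<^sub>R v))"
    by (auto simp: fun_eq_iff sum_distrib_right intro!: sum.cong)
  ultimately show ?thesis by (simp add: has_field_derivative_def)
qed

lemma has_real_derivative_along_axis:
  fixes G :: "real^'n::finite \<Rightarrow> real"
  assumes "G differentiable (at (x + s *\<^sub>R axis i 1))"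
  shows "((\<lambda>t. G (x + t *\<^sub>R axis i 1)) has_real_derivative pd i G (x + s *\<^sub>R axis i 1)) (at s)"
  using has_real_derivative_along[OF assms] by simp

lemma deriv_along_axis:
  "deriv (\<lambda>s. G (x + s *\<^sub>R axis i 1)) u = pd i G (x + u *\<^sub>R axis i (1::real))"
proof -
  have "pd i G (x + u *\<^sub>R axis i 1) = deriv (\<lambda>t. G (x + (u + t) *\<^sub>R axis i 1)) 0"
    by (simp add: pd_def scaleR_add_left add.assoc)
  also have "\<dots> = deriv (\<lambda>s. G (x + s *\<^sub>R axis i 1)) u"
    unfolding deriv_def using DERIV_shift[of "\<lambda>s. G (x + s *\<^sub>R axis i 1)" _ 0 u]
    by (simp add: add.commute)
  finally show ?thesis by simp
qed

definition mixed_difference :: "(real^'n::finite \<Rightarrow> real) \<Rightarrow> 'n \<Rightarrow> 'n \<Rightarrow> real^'n \<Rightarrow> real \<Rightarrow> real" where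
  "mixed_difference g i j p h =
     g (p + h *\<^sub>R axis j 1 + h *\<^sub>R axis i 1) - g (p + h *\<^sub>R axis i 1) - g (p + h *\<^sub>R axis j 1) + g p"

lemma mixed_difference_commute: "mixed_difference g i j p h = mixed_difference g j i p h"
  by (simp add: mixed_difference_def algebra_simps)

lemma mixed_difference_mean_value:
  fixes g :: "real^'n::finite \<Rightarrow> real"
  assumes "0 < h"
    and "\<And>a s. a \<in> {0, h} \<Longrightarrow> 0 \<le> s \<Longrightarrow> s \<le> h \<Longrightarrow>
           g differentiable (at (p + a *\<^sub>R axis j 1 + s *\<^sub>R axis i 1))"
  obtains \<xi> where "0 < \<xi>" "\<xi> < h"
    "mixed_difference g i j p h
       = h * (pd i g (p + h *\<^sub>R axis j 1 + \<xi> *\<^sub>R axis i 1) - pd i g (p + \<xi> *\<^sub>R axis i 1))"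
proof -
  define \<phi> where "\<phi> s = g (p + h *\<^sub>R axis j 1 + s *\<^sub>R axis i 1) - g (p + s *\<^sub>R axis i 1)" for s
  have der: "DERIV \<phi> s :> pd i g (p + h *\<^sub>R axis j 1 + s *\<^sub>R axis i 1) - pd i g (p + s *\<^sub>R axis i 1)"
    if "0 \<le> s" "s \<le> h" for s
    unfolding \<phi>_def[abs_def]
    using assms(2)[of h s] assms(2)[of 0 s] that
    by (intro DERIV_diff has_real_derivative_along_axis) (auto simp: add.assoc)
  obtain \<xi> where "0 < \<xi>" "\<xi> < h"
    "\<phi> h - \<phi> 0 = (h - 0) * (pd i g (p + h *\<^sub>R axis j 1 + \<xi> *\<^sub>R axis i 1) - pd i g (p + \<xi> *\<^sub>R axis i 1))"
    using MVT2[OF assms(1) der] by auto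
  moreover have "mixed_difference g i j p h = \<phi> h - \<phi> 0"
    by (simp add: mixed_difference_def \<phi>_def)
  ultimately show ?thesis using that by (metis diff_zero)
qed

text \<open>By the mean value theorem in direction i, the mixed difference is h times a difference of
  \<open>\<partial>\<^sub>i g\<close> at two points within \<open>2h\<close> of p, which a linear approximation L of \<open>\<partial>\<^sub>i g\<close> at p
  turns into \<open>h L(h e\<^sub>j)\<close> up to the approximation error.\<close>
lemma mixed_difference_bound:
  fixes g :: "real^'n::finite \<Rightarrow> real"
  assumes h: "0 < h"
    and dg: "\<And>a s. a \<in> {0, h} \<Longrightarrow> 0 \<le> s \<Longrightarrow> s \<le> h \<Longrightarrow>
           g differentiable (at (p + a *\<^sub>R axis j 1 + s *\<^sub>R axis i 1))"
    and approx: "\<And>y. norm (y - p) \<le> 2 * h \<Longrightarrow>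
           \<bar>pd i g y - pd i g p - L (y - p)\<bar> \<le> e * norm (y - p)"
    and L: "linear L" "L (axis j 1) = pd j (pd i g) p" and e: "0 \<le> e"
  shows "\<bar>mixed_difference g i j p h - h\<^sup>2 * pd j (pd i g) p\<bar> \<le> 3 * e * h\<^sup>2"
proof -
  obtain \<xi> where \<xi>: "0 < \<xi>" "\<xi> < h"
    and md: "mixed_difference g i j p h
       = h * (pd i g (p + h *\<^sub>R axis j 1 + \<xi> *\<^sub>R axis i 1) - pd i g (p + \<xi> *\<^sub>R axis i 1))"
    using mixed_difference_mean_value[OF h dg] by blast
  define y1 where "y1 = p + h *\<^sub>R axis j 1 + \<xi> *\<^sub>R axis i 1"
  define y2 where "y2 = p + \<xi> *\<^sub>R axis i 1"
  have n1: "norm (y1 - p) \<le> 2 * h"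
    using norm_triangle_ineq[of "h *\<^sub>R axis j (1::real)" "\<xi> *\<^sub>R axis i 1"] \<xi> by (simp add: y1_def)
  have n2: "norm (y2 - p) \<le> h" using \<xi> by (simp add: y2_def)
  have "L (y1 - p) - L (y2 - p) = L (y1 - y2)" using L(1) by (simp add: linear_diff)
  also have "y1 - y2 = h *\<^sub>R axis j 1" by (simp add: y1_def y2_def)
  also have "L (h *\<^sub>R axis j 1) = h * pd j (pd i g) p" using L by (simp add: linear_scale)
  finally have "\<bar>(pd i g y1 - pd i g y2) - h * pd j (pd i g) p\<bar> \<le> e * norm (y1 - p) + e * norm (y2 - p)"
    using approx[OF n1] approx[of y2] n2 h by linarith
  also have "\<dots> \<le> e * (2 * h) + e * h"
    using n1 n2 e by (intro add_mono mult_left_mono) auto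
  finally have "h * \<bar>(pd i g y1 - pd i g y2) - h * pd j (pd i g) p\<bar> \<le> h * (3 * e * h)"
    using h by (simp add: mult_left_mono)
  moreover have "mixed_difference g i j p h - h\<^sup>2 * pd j (pd i g) p
      = h * ((pd i g y1 - pd i g y2) - h * pd j (pd i g) p)"
    by (simp add: md y1_def y2_def power2_eq_square algebra_simps)
  ultimately show ?thesis
    using h by (simp add: abs_mult power2_eq_square mult.commute mult.left_commute)
qed

lemma mixed_difference_approx:
  fixes g :: "real^'n::finite \<Rightarrow> real"
  assumes "open S" "p \<in> S" "\<And>x. x \<in> S \<Longrightarrow> g differentiable (at x)"
    and "pd i g differentiable (at p)" and "e > 0"
  shows "\<exists>d>0. \<forall>h. 0 < h \<and> h < d \<longrightarrow> \<bar>mixed_difference g i j p h - h\<^sup>2 * pd j (pd i g) p\<bar> \<le> e * h\<^sup>2"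
proof -
  define L where "L v = (\<Sum>k\<in>UNIV. v $ k * pd k (pd i g) p)" for v
  have hL: "(pd i g has_derivative L) (at p)"
    unfolding L_def[abs_def] by (rule has_derivative_partials[OF assms(4)])
  obtain d1 where d1: "d1 > 0" "\<And>y. norm (y - p) < d1 \<Longrightarrow>
      norm (pd i g y - pd i g p - L (y - p)) \<le> (e/3) * norm (y - p)"
    using hL assms(5) unfolding has_derivative_at_alt by (metis divide_pos_pos zero_less_numeral)
  obtain r where r: "r > 0" "ball p r \<subseteq> S" using assms(1,2) open_contains_ball by blast
  have "\<bar>mixed_difference g i j p h - h\<^sup>2 * pd j (pd i g) p\<bar> \<le> e * h\<^sup>2"
    if h: "0 < h" "h < min (d1/2) (r/2)" for h
  proof -
    have "\<bar>mixed_difference g i j p h - h\<^sup>2 * pd j (pd i g) p\<bar> \<le> 3 * (e/3) * h\<^sup>2"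
    proof (rule mixed_difference_bound[OF h(1)])
      fix a s assume "a \<in> {0, h}" "0 \<le> s" "s \<le> h"
      then have "norm (a *\<^sub>R axis j 1 + s *\<^sub>R axis i 1 :: real^'n) < r"
        using norm_triangle_ineq[of "a *\<^sub>R axis j (1::real)" "s *\<^sub>R axis i 1"] h by auto
      then have "p + a *\<^sub>R axis j 1 + s *\<^sub>R axis i 1 \<in> ball p r"
        using dist_add_cancel[of p 0 "a *\<^sub>R axis j 1 + s *\<^sub>R axis i 1"] by (simp add: add.assoc)
      then show "g differentiable (at (p + a *\<^sub>R axis j 1 + s *\<^sub>R axis i 1))"
        using r(2) assms(3) by blast
    next
      show "\<bar>pd i g y - pd i g p - L (y - p)\<bar> \<le> e/3 * norm (y - p)" if "norm (y - p) \<le> 2 * h" for y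
        using d1(2)[of y] that h by simp
    qed (rule has_derivative_linear[OF hL], simp add: L_def, use assms(5) in simp)
    then show ?thesis by simp
  qed
  moreover have "min (d1/2) (r/2) > 0" using d1 r by simp
  ultimately show ?thesis by blast
qed

lemma pd_commute:
  fixes g :: "real^'n::finite \<Rightarrow> real"
  assumes "open S" "p \<in> S" "\<And>x. x \<in> S \<Longrightarrow> g differentiable (at x)"
    and "pd i g differentiable (at p)" "pd j g differentiable (at p)"
  shows "pd j (pd i g) p = pd i (pd j g) p"
proof (rule ccontr)
  let ?A = "pd j (pd i g) p" and ?B = "pd i (pd j g) p"
  assume "?A \<noteq> ?B"
  define e where "e = \<bar>?A - ?B\<bar> / 4"
  have e: "e > 0" using \<open>?A \<noteq> ?B\<close> by (simp add: e_def)
  obtain d1 where d1: "d1 > 0"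
      "\<forall>h. 0 < h \<and> h < d1 \<longrightarrow> \<bar>mixed_difference g i j p h - h\<^sup>2 * ?A\<bar> \<le> e * h\<^sup>2"
    using mixed_difference_approx[OF assms(1-4) e] by blast
  obtain d2 where d2: "d2 > 0"
      "\<forall>h. 0 < h \<and> h < d2 \<longrightarrow> \<bar>mixed_difference g j i p h - h\<^sup>2 * ?B\<bar> \<le> e * h\<^sup>2"
    using mixed_difference_approx[OF assms(1-3,5) e] by blast
  define h where "h = min d1 d2 / 2"
  have h: "0 < h" "h < d1" "h < d2" using d1 d2 by (auto simp: h_def)
  have "\<bar>h\<^sup>2 * ?A - h\<^sup>2 * ?B\<bar> \<le> 2 * e * h\<^sup>2"
    using d1(2)[rule_format, of h] d2(2)[rule_format, of h] h
    by (simp add: mixed_difference_commute[of g j i] abs_le_iff)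
  then have "h\<^sup>2 * \<bar>?A - ?B\<bar> \<le> h\<^sup>2 * (2 * e)"
    by (simp add: right_diff_distrib[symmetric] abs_mult mult.commute mult.left_commute)
  then have "\<bar>?A - ?B\<bar> \<le> 2 * e" using h by simp
  then show False using e by (simp add: e_def)
qed

lemma Cinf_on_differentiable_at:
  assumes "open S" "Cinf_on S F" "x \<in> S"
  shows "pds is F differentiable (at x)"
  using assms unfolding Cinf_on_def by (metis at_within_open differentiable_on_def)

section \<open>Smooth functions of one variable\<close>

definition smooth_upto :: "nat \<Rightarrow> real set \<Rightarrow> (real \<Rightarrow> real) \<Rightarrow> bool" where
  "smooth_upto n I F \<longleftrightarrow> (\<forall>k\<le>n. \<forall>t\<in>I. (deriv ^^ k) F field_differentiable (at t))"

definition smooth_on :: "real set \<Rightarrow> (real \<Rightarrow> real) \<Rightarrow> bool" where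
  "smooth_on I F \<longleftrightarrow> (\<forall>n. smooth_upto n I F)"

lemma deriv_cong_open:
  assumes "open I" "t \<in> I" "\<And>s. s \<in> I \<Longrightarrow> F s = G s"
  shows "deriv F t = deriv G t"
proof -
  have "eventually (\<lambda>s. s \<in> I) (nhds t)" using assms(1,2) by (rule eventually_nhds_in_open)
  then have "eventually (\<lambda>s. F s = G s) (nhds t)" by eventually_elim (use assms(3) in auto)
  then show ?thesis by (rule deriv_cong_ev) simp
qed

lemma higher_deriv_cong_open:
  assumes "open I" "t \<in> I" "\<And>s. s \<in> I \<Longrightarrow> F s = G s"
  shows "(deriv ^^ k) F t = (deriv ^^ k) G t"
  using assms(2)
proof (induction k arbitrary: t)
  case 0
  then show ?case using assms(3) by simp
next
  case (Suc k)
  then show ?case using deriv_cong_open[OF assms(1) Suc.prems Suc.IH] by simp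
qed

lemma field_differentiable_cong_open:
  assumes "open I" "t \<in> I" "\<And>s. s \<in> I \<Longrightarrow> F s = G s" "F field_differentiable (at t)"
  shows "G field_differentiable (at t)"
proof -
  obtain D where "(F has_field_derivative D) (at t)" using assms(4) field_differentiable_def by blast
  then have "(G has_field_derivative D) (at t)"
    by (rule has_field_derivative_transform_within_open[OF _ assms(1,2)]) (use assms(3) in auto)
  then show ?thesis using field_differentiable_def by blast
qed

lemma smooth_upto_cong:
  assumes "open I" "smooth_upto n I F" "\<And>s. s \<in> I \<Longrightarrow> F s = G s"
  shows "smooth_upto n I G"
  unfolding smooth_upto_def
proof (intro allI impI ballI)
  fix k t assume "k \<le> n" "t \<in> I"
  then have "(deriv ^^ k) F field_differentiable (at t)"
    using assms(2) unfolding smooth_upto_def by blast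
  moreover have "(deriv ^^ k) F s = (deriv ^^ k) G s" if "s \<in> I" for s
    using assms(1) that assms(3) by (rule higher_deriv_cong_open)
  ultimately show "(deriv ^^ k) G field_differentiable (at t)"
    using field_differentiable_cong_open[OF assms(1) \<open>t \<in> I\<close>] by blast
qed

lemma smooth_upto_Suc:
  "smooth_upto (Suc n) I F \<longleftrightarrow> (\<forall>t\<in>I. F field_differentiable (at t)) \<and> smooth_upto n I (deriv F)"
proof -
  have shift: "(deriv ^^ Suc k) F = (deriv ^^ k) (deriv F)" for k
    by (simp add: funpow_Suc_right del: funpow.simps)
  show ?thesis
  proof
    assume "smooth_upto (Suc n) I F"
    then show "(\<forall>t\<in>I. F field_differentiable (at t)) \<and> smooth_upto n I (deriv F)"
      unfolding smooth_upto_def by (metis funpow_0 id_apply le0 shift Suc_le_mono)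
  next
    assume "(\<forall>t\<in>I. F field_differentiable (at t)) \<and> smooth_upto n I (deriv F)"
    then show "smooth_upto (Suc n) I F"
      unfolding smooth_upto_def by (metis funpow_0 id_apply not0_implies_Suc shift Suc_le_mono)
  qed
qed

lemma smooth_upto_mono: "m \<le> n \<Longrightarrow> smooth_upto n I F \<Longrightarrow> smooth_upto m I F"
  unfolding smooth_upto_def by auto

lemma smooth_upto_const: "smooth_upto n I (\<lambda>t. c)"
proof (induction n arbitrary: c)
  case 0
  then show ?case by (simp add: smooth_upto_def)
next
  case (Suc n)
  have "deriv (\<lambda>t. c) = (\<lambda>t. 0)" by (simp add: fun_eq_iff)
  then show ?case using Suc.IH by (simp add: smooth_upto_Suc)
qed

lemma smooth_upto_add:
  "open I \<Longrightarrow> smooth_upto n I F \<Longrightarrow> smooth_upto n I G \<Longrightarrow> smooth_upto n I (\<lambda>t. F t + G t)"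
proof (induction n arbitrary: F G)
  case 0
  then show ?case by (auto simp: smooth_upto_def intro: field_differentiable_add)
next
  case (Suc n)
  then have dF: "\<forall>t\<in>I. F field_differentiable (at t)" and dG: "\<forall>t\<in>I. G field_differentiable (at t)"
    and sum: "smooth_upto n I (\<lambda>t. deriv F t + deriv G t)"
    by (auto simp: smooth_upto_Suc)
  have "smooth_upto n I (deriv (\<lambda>t. F t + G t))"
    by (rule smooth_upto_cong[OF Suc.prems(1) sum]) (use dF dG in \<open>auto intro!: deriv_add[symmetric]\<close>)
  then show ?case using dF dG by (auto simp: smooth_upto_Suc intro: field_differentiable_add)
qed

lemma smooth_upto_mult:
  "open I \<Longrightarrow> smooth_upto n I F \<Longrightarrow> smooth_upto n I G \<Longrightarrow> smooth_upto n I (\<lambda>t. F t * G t)"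
proof (induction n arbitrary: F G)
  case 0
  then show ?case by (auto simp: smooth_upto_def intro: field_differentiable_mult)
next
  case (Suc n)
  then have dF: "\<forall>t\<in>I. F field_differentiable (at t)" and dG: "\<forall>t\<in>I. G field_differentiable (at t)"
    and "smooth_upto n I (deriv F)" "smooth_upto n I (deriv G)"
    and "smooth_upto n I F" "smooth_upto n I G"
    by (auto simp: smooth_upto_Suc intro: smooth_upto_mono[of n "Suc n"])
  then have prod: "smooth_upto n I (\<lambda>t. F t * deriv G t + deriv F t * G t)"
    by (intro smooth_upto_add Suc.IH Suc.prems(1))
  have "smooth_upto n I (deriv (\<lambda>t. F t * G t))"
    by (rule smooth_upto_cong[OF Suc.prems(1) prod]) (use dF dG in auto)
  then show ?case using dF dG by (auto simp: smooth_upto_Suc intro: field_differentiable_mult)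
qed

lemma smooth_upto_inverse:
  assumes "open I" "smooth_upto n I y" "\<And>t. t \<in> I \<Longrightarrow> y t \<noteq> 0"
  shows "smooth_upto n I (\<lambda>t. inverse (y t))"
  using assms(2)
proof (induction n)
  case 0
  have "(\<lambda>t. inverse (y t)) field_differentiable (at t)" if t: "t \<in> I" for t
  proof -
    obtain D where "(y has_real_derivative D) (at t)"
      using 0 t unfolding smooth_upto_def field_differentiable_def by auto
    then show ?thesis using DERIV_inverse' assms(3)[OF t] field_differentiable_def by blast
  qed
  then show ?case by (simp add: smooth_upto_def)
next
  case (Suc n)
  have "smooth_upto n I y" using Suc.prems smooth_upto_mono[of n "Suc n"] by simp
  then have "smooth_upto n I (\<lambda>t. inverse (y t))" by (rule Suc.IH)
  moreover from Suc.prems have dy: "\<And>t. t \<in> I \<Longrightarrow> (y has_real_derivative deriv y t) (at t)"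
    and "smooth_upto n I (deriv y)"
    by (auto simp: smooth_upto_Suc DERIV_deriv_iff_field_differentiable)
  ultimately have prod: "smooth_upto n I (\<lambda>t. (-1) * deriv y t * inverse (y t) * inverse (y t))"
    by (intro smooth_upto_mult smooth_upto_const assms(1))
  have der: "((\<lambda>t. inverse (y t)) has_real_derivative (-1) * deriv y t * inverse (y t) * inverse (y t)) (at t)"
    if "t \<in> I" for t
    using DERIV_inverse'[OF dy[OF that]] assms(3)[OF that] by (simp add: mult.commute)
  have "smooth_upto n I (deriv (\<lambda>t. inverse (y t)))"
    using der by (intro smooth_upto_cong[OF assms(1) prod] DERIV_imp_deriv[symmetric])
  moreover have "\<forall>t\<in>I. (\<lambda>t. inverse (y t)) field_differentiable (at t)"
    using der by (auto simp: field_differentiable_def)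
  ultimately show ?case by (simp add: smooth_upto_Suc)
qed

lemma smooth_on_if_derivative_smooth:
  assumes "open I" "\<And>t. t \<in> I \<Longrightarrow> (F has_real_derivative G t) (at t)" "smooth_on I G"
  shows "smooth_on I F"
proof -
  have "deriv F t = G t" if "t \<in> I" for t
    using assms(2)[OF that] by (rule DERIV_imp_deriv)
  then have "smooth_upto n I (deriv F)" for n
    using assms(3) smooth_upto_cong[OF assms(1)] unfolding smooth_on_def by metis
  then have "smooth_upto (Suc n) I F" for n
    using assms(2) by (auto simp: smooth_upto_Suc field_differentiable_def)
  then show ?thesis
    unfolding smooth_on_def by (meson le_SucI order_refl smooth_upto_mono)
qed

lemma smooth_linear_ode_solution:
  assumes "open I" "smooth_on I b"
    and y: "\<And>t. t \<in> I \<Longrightarrow> (y has_real_derivative y' t) (at t)"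
    and y': "\<And>t. t \<in> I \<Longrightarrow> (y' has_real_derivative b t * y t) (at t)"
  shows "smooth_on I y \<and> smooth_on I y'"
proof -
  have "smooth_upto n I y \<and> smooth_upto n I y'" for n
  proof (induction n)
    case 0
    then show ?case using y y' by (auto simp: smooth_upto_def field_differentiable_def)
  next
    case (Suc n)
    have "smooth_upto n I (deriv y)"
      by (rule smooth_upto_cong[OF assms(1) conjunct2[OF Suc]]) (simp add: DERIV_imp_deriv[OF y])
    moreover have "smooth_upto n I (\<lambda>t. b t * y t)"
      using assms(2) Suc unfolding smooth_on_def by (intro smooth_upto_mult assms(1)) auto
    then have "smooth_upto n I (deriv y')"
      by (rule smooth_upto_cong[OF assms(1)]) (simp add: DERIV_imp_deriv[OF y'])
    ultimately show ?case using y y' by (auto simp: smooth_upto_Suc field_differentiable_def)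
  qed
  then show ?thesis by (simp add: smooth_on_def)
qed

lemma pd_comp_nth: "pd j (\<lambda>q. G (q $ i)) q = (if j = i then deriv G (q $ i) else 0)"
proof (cases "j = i")
  case True
  have "(\<lambda>D. ((\<lambda>t. G ((q + t *\<^sub>R axis j 1) $ i)) has_field_derivative D) (at 0))
      = (\<lambda>D. (G has_field_derivative D) (at (q $ i)))"
    using True DERIV_shift[of G _ 0 "q $ i"] by (simp add: axis_def add.commute fun_eq_iff)
  then show ?thesis using True by (simp add: pd_def deriv_def)
next
  case False
  then show ?thesis by (simp add: pd_def axis_def)
qed

lemma pds_comp_nth:
  "pds is (\<lambda>q. F (q $ i)) = (\<lambda>q. if set is \<subseteq> {i} then (deriv ^^ length is) F (q $ i) else 0)"
proof (induction "is")
  case Nil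
  then show ?case by simp
next
  case (Cons j "is")
  show ?case
  proof
    fix q
    show "pds (j # is) (\<lambda>q. F (q $ i)) q
        = (if set (j # is) \<subseteq> {i} then (deriv ^^ length (j # is)) F (q $ i) else 0)"
      by (cases "set is \<subseteq> {i}") (simp_all add: Cons.IH pd_comp_nth)
  qed
qed

lemma Cinf_on_comp_nth:
  fixes i :: "'n::finite"
  assumes "\<And>q. q \<in> W \<Longrightarrow> q $ i \<in> I" and "smooth_on I F"
  shows "Cinf_on W (\<lambda>q. F (q $ i))"
  unfolding Cinf_on_def pds_comp_nth
proof (intro allI differentiable_at_imp_differentiable_on)
  fix "is" :: "'n list" and q assume "q \<in> W"
  then have "(deriv ^^ length is) F differentiable (at (q $ i))"
    using assms unfolding smooth_on_def smooth_upto_def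
    by (blast intro: field_differentiable_imp_differentiable)
  then have "((deriv ^^ length is) F \<circ> (\<lambda>q. q $ i)) differentiable (at q)"
    by (rule differentiable_chain_at[OF bounded_linear_imp_differentiable[OF bounded_linear_vec_nth]])
  then have "(\<lambda>q. (deriv ^^ length is) F (q $ i)) differentiable (at q)"
    by (simp add: o_def)
  then show "(\<lambda>q. if set is \<subseteq> {i} then (deriv ^^ length is) F (q $ i) else 0) differentiable (at q)"
    by (cases "set is \<subseteq> {i}") simp_all
qed

lemma smooth_on_along_axis:
  assumes "open D" "Cinf_on D H" "\<And>u. u \<in> I \<Longrightarrow> x + u *\<^sub>R axis i 1 \<in> D"
  shows "smooth_on I (\<lambda>u. pds js H (x + u *\<^sub>R axis i 1))"
proof -
  have higher: "(deriv ^^ k) (\<lambda>u. pds js H (x + u *\<^sub>R axis i 1))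
      = (\<lambda>u. pds (replicate k i @ js) H (x + u *\<^sub>R axis i 1))" for k
  proof (induction k)
    case (Suc k)
    show ?case by (rule ext) (simp add: Suc.IH deriv_along_axis)
  qed simp
  have "(\<lambda>u. pds (replicate k i @ js) H (x + u *\<^sub>R axis i 1)) field_differentiable (at t)"
    if "t \<in> I" for k t
    using has_real_derivative_along_axis Cinf_on_differentiable_at[OF assms(1,2) assms(3)[OF that]]
    unfolding field_differentiable_def by blast
  then show ?thesis unfolding smooth_on_def smooth_upto_def higher by blast
qed

section \<open>A linear second-order equation and its Riccati equation\<close>

text \<open>Picard iteration for \<open>y'' = b y\<close>, \<open>y(a) = y'(a) = 1\<close> on a short interval \<open>[a, c]\<close>.
  Functions on \<open>[a, c]\<close> are extended constantly to all of \<open>\<real>\<close> (via \<open>clamp\<close>) so that the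
  complete space of bounded continuous functions \<open>real \<Rightarrow>\<^sub>C real\<close> can be used.\<close>
locale small_linear_ode =
  fixes a c B :: real and b :: "real \<Rightarrow> real"
  assumes a_less_c: "a < c" and short: "c - a \<le> 1" and B_nonneg: "0 \<le> B"
    and b_bound: "\<And>t. t \<in> {a..c} \<Longrightarrow> \<bar>b t\<bar> \<le> B" and small: "B * (c - a) \<le> 1/4"
    and continuous_b: "continuous_on {a..c} b"
begin

definition clamp :: "real \<Rightarrow> real" where "clamp t = max a (min c t)"

definition first_integral :: "(real \<Rightarrow> real) \<Rightarrow> real \<Rightarrow> real" where
  "first_integral z s = integral {a..s} (\<lambda>r. b r * z r)"

definition second_integral :: "(real \<Rightarrow> real) \<Rightarrow> real \<Rightarrow> real" where
  "second_integral z s = integral {a..s} (first_integral z)"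

definition picard_fun :: "(real \<Rightarrow> real) \<Rightarrow> real \<Rightarrow> real" where
  "picard_fun z t = 1 + (clamp t - a) + second_integral z (clamp t)"

lemma clamp_bounds [simp]: "a \<le> clamp t" "clamp t \<le> c"
  using a_less_c by (auto simp: clamp_def)

lemma clamp_in: "clamp t \<in> {a..c}"
  by simp

lemma clamp_id: "t \<in> {a..c} \<Longrightarrow> clamp t = t"
  by (auto simp: clamp_def)

lemma continuous_on_clamp: "continuous_on S clamp"
  unfolding clamp_def by (intro continuous_intros)

lemma B_len_sq_le: "B * (c - a) * (c - a) \<le> 1/4"
proof -
  have "B * (c - a) * (c - a) \<le> B * (c - a) * 1"
    using short a_less_c B_nonneg by (intro mult_left_mono) auto
  then show ?thesis using small by simp
qed

lemma continuous_on_b_mult: "continuous_on {a..c} z \<Longrightarrow> continuous_on {a..c} (\<lambda>r. b r * z r)"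
  by (intro continuous_on_mult continuous_b)

lemma continuous_on_first_integral:
  "continuous_on {a..c} z \<Longrightarrow> continuous_on {a..c} (first_integral z)"
  unfolding first_integral_def[abs_def]
  by (intro indefinite_integral_continuous_1 integrable_continuous_interval continuous_on_b_mult)

lemma continuous_on_second_integral:
  "continuous_on {a..c} z \<Longrightarrow> continuous_on {a..c} (second_integral z)"
  unfolding second_integral_def[abs_def]
  by (intro indefinite_integral_continuous_1 integrable_continuous_interval continuous_on_first_integral)

lemma abs_first_integral_le:
  assumes "continuous_on {a..c} z" "\<And>r. r \<in> {a..c} \<Longrightarrow> \<bar>z r\<bar> \<le> M" "s \<in> {a..c}"
  shows "\<bar>first_integral z s\<bar> \<le> B * M * (c - a)"
proof -
  have M: "0 \<le> M" using assms(2)[of a] a_less_c by auto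
  have "norm (first_integral z s) \<le> (B * M) * (s - a)"
    unfolding first_integral_def using assms(3)
  proof (intro integral_bound)
    show "continuous_on {a..s} (\<lambda>r. b r * z r)"
      using assms(3) by (auto intro: continuous_on_subset[OF continuous_on_b_mult[OF assms(1)]])
    show "norm (b r * z r) \<le> B * M" if "r \<in> {a..s}" for r
      using that assms(2,3) b_bound B_nonneg by (auto simp: abs_mult intro!: mult_mono)
  qed auto
  also have "\<dots> \<le> (B * M) * (c - a)" using assms(3) B_nonneg M by (intro mult_left_mono) auto
  finally show ?thesis by simp
qed

lemma abs_second_integral_le:
  assumes "continuous_on {a..c} z" "\<And>r. r \<in> {a..c} \<Longrightarrow> \<bar>z r\<bar> \<le> M" "s \<in> {a..c}"
  shows "\<bar>second_integral z s\<bar> \<le> M / 4"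
proof -
  have M: "0 \<le> M" using assms(2)[of a] a_less_c by auto
  have "norm (second_integral z s) \<le> (B * M * (c - a)) * (s - a)"
    unfolding second_integral_def using assms(3)
  proof (intro integral_bound)
    show "continuous_on {a..s} (first_integral z)"
      using assms(3) by (auto intro: continuous_on_subset[OF continuous_on_first_integral[OF assms(1)]])
  qed (use abs_first_integral_le[OF assms(1,2)] in auto)
  also have "\<dots> \<le> (B * M * (c - a)) * (c - a)"
    using assms(3) B_nonneg M a_less_c by (intro mult_left_mono) auto
  also have "\<dots> = M * (B * (c - a) * (c - a))" by simp
  also have "\<dots> \<le> M * (1/4)" using B_len_sq_le M by (rule mult_left_mono)
  finally show ?thesis by simp
qed

lemma first_integral_diff:
  assumes "continuous_on {a..c} z1" "continuous_on {a..c} z2" "s \<in> {a..c}"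
  shows "first_integral z1 s - first_integral z2 s = first_integral (\<lambda>r. z1 r - z2 r) s"
proof -
  have int: "(\<lambda>r. b r * z r) integrable_on {a..s}" if "continuous_on {a..c} z" for z
    using assms(3)
    by (intro integrable_continuous_interval continuous_on_subset[OF continuous_on_b_mult[OF that]]) auto
  show ?thesis
    unfolding first_integral_def using integral_diff[OF int[OF assms(1)] int[OF assms(2)]]
    by (simp add: right_diff_distrib)
qed

lemma second_integral_diff:
  assumes "continuous_on {a..c} z1" "continuous_on {a..c} z2" "s \<in> {a..c}"
  shows "second_integral z1 s - second_integral z2 s = second_integral (\<lambda>r. z1 r - z2 r) s"
proof -
  have int: "first_integral z integrable_on {a..s}" if "continuous_on {a..c} z" for z
    using assms(3)
    by (intro integrable_continuous_interval continuous_on_subset[OF continuous_on_first_integral[OF that]]) auto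
  have "second_integral z1 s - second_integral z2 s
      = integral {a..s} (\<lambda>r. first_integral z1 r - first_integral z2 r)"
    unfolding second_integral_def using integral_diff[OF int[OF assms(1)] int[OF assms(2)]] by simp
  also have "\<dots> = second_integral (\<lambda>r. z1 r - z2 r) s"
    unfolding second_integral_def using assms(3) by (intro integral_cong first_integral_diff assms(1,2)) auto
  finally show ?thesis .
qed

lemma abs_picard_fun_le: "\<bar>picard_fun (apply_bcontfun z) t\<bar> \<le> 2 + norm z / 4"
proof -
  have "\<bar>second_integral z (clamp t)\<bar> \<le> norm z / 4"
    by (rule abs_second_integral_le) (auto simp: clamp_in norm_bounded[of z, simplified])
  then show ?thesis
    using clamp_bounds[of t] short unfolding picard_fun_def by linarith
qed

lemma picard_fun_bcontfun: "picard_fun (apply_bcontfun z) \<in> bcontfun"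
proof (rule bcontfun_normI)
  show "continuous_on UNIV (picard_fun z)"
    unfolding picard_fun_def[abs_def]
    by (intro continuous_intros continuous_on_clamp
        continuous_on_compose2[OF continuous_on_second_integral[of z] continuous_on_clamp])
      (auto simp: clamp_in)
  show "norm (picard_fun z t) \<le> 2 + norm z / 4" for t
    using abs_picard_fun_le by simp
qed

definition picard :: "(real \<Rightarrow>\<^sub>C real) \<Rightarrow> (real \<Rightarrow>\<^sub>C real)" where
  "picard z = Bcontfun (picard_fun z)"

lemma apply_picard: "apply_bcontfun (picard z) = picard_fun z"
  unfolding picard_def using picard_fun_bcontfun by (simp add: Bcontfun_inverse)

lemma picard_contraction: "dist (picard z1) (picard z2) \<le> (1/4) * dist z1 z2"
proof (rule dist_bound)
  fix t
  have "\<bar>picard_fun z1 t - picard_fun z2 t\<bar> = \<bar>second_integral (\<lambda>r. z1 r - z2 r) (clamp t)\<bar>"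
    unfolding picard_fun_def using second_integral_diff[of z1 z2, OF _ _ clamp_in] by simp
  also have "\<dots> \<le> dist z1 z2 / 4"
    by (rule abs_second_integral_le)
      (auto intro!: continuous_intros clamp_in simp: dist_bounded[of z1 _ z2, simplified dist_real_def])
  finally show "dist (picard z1 t) (picard z2 t) \<le> (1/4) * dist z1 z2"
    by (simp add: apply_picard dist_real_def)
qed

lemma picard_fixpoint_bound:
  assumes "picard z = z"
  shows "\<bar>z t\<bar> \<le> 8/3"
proof -
  have "norm z \<le> 2 + norm z / 4"
    using abs_picard_fun_le assms by (intro norm_bound) (metis apply_picard real_norm_def)
  then show ?thesis using norm_bounded[of z t] by simp
qed

text \<open>The smallness of the interval keeps y and y' within 2/3 of their initial value 1.\<close>
lemma positive_solution_exists:
  obtains y y' where "\<And>t. t \<in> {a<..<c} \<Longrightarrow> (y has_real_derivative y' t) (at t)"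
    and "\<And>t. t \<in> {a<..<c} \<Longrightarrow> (y' has_real_derivative b t * y t) (at t)"
    and "\<And>t. t \<in> {a<..<c} \<Longrightarrow> y t > 0" and "\<And>t. t \<in> {a<..<c} \<Longrightarrow> y' t > 0"
proof -
  obtain z where "picard z = z"
    using banach_fix_type[of "1/4" picard] picard_contraction by auto
  then have z: "z t = picard_fun z t" and z_bound: "\<bar>z r\<bar> \<le> 8/3" for t r
    using apply_picard picard_fixpoint_bound by metis+
  define y where "y t = 1 + (t - a) + second_integral z t" for t
  define y' where "y' t = 1 + first_integral z t" for t
  have yz: "y t = z t" if "t \<in> {a..c}" for t using z[of t] that by (simp add: picard_fun_def clamp_id y_def)
  show ?thesis
  proof (rule that)
    fix t assume t: "t \<in> {a<..<c}"
    then have t': "t \<in> {a..c}" and at: "at t within {a..c} = at t" by (auto simp: at_within_Icc_at)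
    have "(second_integral z has_real_derivative first_integral z t) (at t)"
      using integral_has_real_derivative[OF continuous_on_first_integral[of z] t'] at
      by (simp add: second_integral_def[abs_def])
    then show "(y has_real_derivative y' t) (at t)"
      unfolding y_def[abs_def] y'_def by (auto intro!: derivative_eq_intros)
    have "(first_integral z has_real_derivative b t * z t) (at t)"
      using integral_has_real_derivative[OF continuous_on_b_mult[of z] t'] at
      by (simp add: first_integral_def[abs_def])
    then show "(y' has_real_derivative b t * y t) (at t)"
      unfolding y'_def[abs_def] using yz[OF t'] by (auto intro!: derivative_eq_intros)
    have "\<bar>second_integral z t\<bar> \<le> (8/3) / 4"
      by (rule abs_second_integral_le[OF _ _ t']) (use z_bound in auto)
    then show "y t > 0" using t unfolding y_def by auto
    have "\<bar>first_integral z t\<bar> \<le> B * (8/3) * (c - a)"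
      by (rule abs_first_integral_le[OF _ _ t']) (use z_bound in auto)
    then show "y' t > 0" using small unfolding y'_def by auto
  qed
qed

end

text \<open>The substitution \<open>F = 2 ln y\<close> turns \<open>F'' + F'\<^sup>2/2 = 2 b\<close> into the linear equation \<open>y'' = b y\<close>.\<close>
lemma (in small_linear_ode) riccati_solution_exists:
  assumes "smooth_on {a<..<c} b"
  obtains F where "smooth_on {a<..<c} F"
    and "\<And>t. t \<in> {a<..<c} \<Longrightarrow> deriv F t \<noteq> 0"
    and "\<And>t. t \<in> {a<..<c} \<Longrightarrow> deriv (deriv F) t + (deriv F t)\<^sup>2 / 2 = 2 * b t"
proof -
  define I where "I = {a<..<c}"
  have I: "open I" by (simp add: I_def)
  obtain y y' where dy: "\<And>t. t \<in> I \<Longrightarrow> (y has_real_derivative y' t) (at t)"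
    and dy': "\<And>t. t \<in> I \<Longrightarrow> (y' has_real_derivative b t * y t) (at t)"
    and y_pos: "\<And>t. t \<in> I \<Longrightarrow> y t > 0" and y'_pos: "\<And>t. t \<in> I \<Longrightarrow> y' t > 0"
    using positive_solution_exists unfolding I_def by metis
  have smooth_y: "smooth_upto n I y \<and> smooth_upto n I y'" for n
    using smooth_linear_ode_solution[OF I assms[folded I_def] dy dy'] by (simp add: smooth_on_def)
  define F where "F t = 2 * ln (y t)" for t
  have dF: "(F has_real_derivative 2 * y' t * inverse (y t)) (at t)" if "t \<in> I" for t
    unfolding F_def[abs_def]
    using DERIV_cmult[OF DERIV_chain2[OF DERIV_ln_divide[OF y_pos[OF that]] dy[OF that]], of 2]
    by (simp add: divide_inverse ac_simps)
  have F': "deriv F t = 2 * y' t * inverse (y t)" if "t \<in> I" for t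
    using dF[OF that] by (rule DERIV_imp_deriv)
  have "smooth_on I (\<lambda>t. 2 * y' t * inverse (y t))"
    using smooth_y y_pos unfolding smooth_on_def
    by (intro allI smooth_upto_mult smooth_upto_inverse smooth_upto_const I) (auto simp: less_imp_neq[symmetric])
  with I dF have smooth_F: "smooth_on I F"
    by (rule smooth_on_if_derivative_smooth)
  show ?thesis
  proof (rule that[unfolded I_def[symmetric]])
    show "smooth_on I F" by (fact smooth_F)
    fix t assume t: "t \<in> I"
    show "deriv F t \<noteq> 0" using F'[OF t] y'_pos[OF t] y_pos[OF t] by simp
    have "((\<lambda>t. 2 * y' t * inverse (y t)) has_real_derivative
        2 * (b t * y t) * inverse (y t) + 2 * y' t * (- (inverse (y t) * y' t * inverse (y t)))) (at t)"
      using y_pos[OF t] by (auto intro!: derivative_eq_intros dy[OF t] dy'[OF t])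
    moreover have "deriv (deriv F) t = deriv (\<lambda>t. 2 * y' t * inverse (y t)) t"
      using F' by (intro deriv_cong_open[OF I t])
    ultimately have "deriv (deriv F) t
        = 2 * (b t * y t) * inverse (y t) + 2 * y' t * (- (inverse (y t) * y' t * inverse (y t)))"
      using DERIV_imp_deriv by metis
    then show "deriv (deriv F) t + (deriv F t)\<^sup>2 / 2 = 2 * b t"
      using y_pos[OF t] unfolding F'[OF t] by (simp add: power2_eq_square field_simps)
  qed
qed

section \<open>Coordinates of the pp-wave\<close>

lemma sum_UNIV_coord: "(\<Sum>i\<in>UNIV. F i) = F U + F V + F X1 + F X2"
  by (simp add: UNIV_coord add.assoc)

text \<open>The coordinate of \<open>(u, x\<^sub>1, x\<^sub>2)\<close> that \<open>proj3\<close> reads from direction i; the value at V is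
  arbitrary, since H does not depend on v.\<close>
definition base_coord :: "coord \<Rightarrow> coord3" where
  "base_coord i = (case i of U \<Rightarrow> U3 | V \<Rightarrow> U3 | X1 \<Rightarrow> X13 | X2 \<Rightarrow> X23)"

lemma proj3_add: "proj3 (p + q) = proj3 p + proj3 q"
  by (auto simp: proj3_def vec_eq_iff split: coord3.splits)

lemma proj3_scaleR: "proj3 (t *\<^sub>R p) = t *\<^sub>R proj3 p"
  by (auto simp: proj3_def vec_eq_iff split: coord3.splits)

lemma proj3_axis: "proj3 (axis i 1) = (if i = V then 0 else axis (base_coord i) 1)"
  by (cases i) (auto simp: proj3_def vec_eq_iff axis_def base_coord_def split: coord3.splits)

lemma linear_proj3: "linear proj3"
  by (rule linearI) (simp_all add: proj3_add proj3_scaleR)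

lemma proj3_surj: "surj proj3"
proof -
  have "proj3 (\<chi> c. case c of U \<Rightarrow> y $ U3 | V \<Rightarrow> 0 | X1 \<Rightarrow> y $ X13 | X2 \<Rightarrow> y $ X23) = y" for y
    by (auto simp: proj3_def vec_eq_iff split: coord3.splits)
  then show ?thesis by (rule surjI)
qed

lemma open_proj3_vimage: "open D \<Longrightarrow> open {p. proj3 p \<in> D}"
  using continuous_open_vimage[of D proj3] linear_proj3
  by (simp add: vimage_def linear_continuous_at linear_conv_bounded_linear)

lemma pd_comp_proj3:
  "pd i (\<lambda>q. G (proj3 q)) p = (if i = V then 0 else pd (base_coord i) G (proj3 p))"
  unfolding pd_def by (simp add: proj3_add proj3_scaleR proj3_axis)

lemma differentiable_comp_proj3:
  "G differentiable (at (proj3 y)) \<Longrightarrow> (\<lambda>y. G (proj3 y)) differentiable (at y)"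
  using differentiable_chain_at[of proj3 y G] linear_proj3
  by (simp add: linear_imp_differentiable o_def)

lemma has_derivative_comp_proj3:
  "G differentiable (at (proj3 y)) \<Longrightarrow>
   ((\<lambda>y. G (proj3 y)) has_derivative (\<lambda>h. \<Sum>i\<in>UNIV. h $ i * pd i (\<lambda>y. G (proj3 y)) y)) (at y)"
  by (rule has_derivative_partials[OF differentiable_comp_proj3])

section \<open>Curvature of pp-waves\<close>

lemma matrix_inv_eq:
  fixes A :: "'a::comm_semiring_1^'n^'n"
  assumes "A ** B = mat 1" "B ** A = mat 1"
  shows "matrix_inv A = B"
proof -
  have "A ** matrix_inv A = mat 1 \<and> matrix_inv A ** A = mat 1"
    unfolding matrix_inv_def by (rule someI[of _ B]) (use assms in blast)
  then have "matrix_inv A = (B ** A) ** matrix_inv A"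
    by (simp add: assms(2) matrix_mul_lid)
  also have "\<dots> = B"
    using \<open>A ** matrix_inv A = mat 1 \<and> _\<close> by (simp add: matrix_mul_assoc[symmetric] matrix_mul_rid)
  finally show ?thesis .
qed

definition ppw_inverse :: "(real^coord3 \<Rightarrow> real) \<Rightarrow> real^coord \<Rightarrow> real^coord^coord" where
  "ppw_inverse H p = (\<chi> k l. if (k = U \<and> l = V) \<or> (k = V \<and> l = U) then 1
     else if k = V \<and> l = V then - H (proj3 p)
     else if k = l \<and> (k = X1 \<or> k = X2) then 1 else 0)"

lemma ginv_ppw: "ginv (ppw H) p = ppw_inverse H p"
proof -
  have right: "ppw H p ** ppw_inverse H p = mat 1"
    unfolding matrix_matrix_mult_def
    by (simp add: vec_eq_iff sum_UNIV_coord ppw_def ppw_inverse_def mat_def) (metis coord.exhaust)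
  have left: "ppw_inverse H p ** ppw H p = mat 1"
    unfolding matrix_matrix_mult_def
    by (simp add: vec_eq_iff sum_UNIV_coord ppw_def ppw_inverse_def mat_def) (metis coord.exhaust)
  show ?thesis
    using matrix_inv_eq[OF right left] by (simp add: ginv_def)
qed

lemma pd_ppw:
  "pd l (\<lambda>q. ppw H q $ i $ j) p
     = (if i = U \<and> j = U then (if l = V then 0 else pd (base_coord l) H (proj3 p)) else 0)"
proof -
  have "(\<lambda>q. ppw H q $ i $ j) = (if i = U \<and> j = U then (\<lambda>q. H (proj3 q))
      else (\<lambda>q. if (i = U \<and> j = V) \<or> (i = V \<and> j = U) \<or> (i = X1 \<and> j = X1) \<or> (i = X2 \<and> j = X2) then 1 else 0))"
    by (auto simp: ppw_def fun_eq_iff)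
  then show ?thesis by (simp add: pd_comp_proj3)
qed

definition ppw_christoffel :: "(real^coord3 \<Rightarrow> real) \<Rightarrow> coord \<Rightarrow> coord \<Rightarrow> coord \<Rightarrow> real^coord3 \<Rightarrow> real" where
  "ppw_christoffel H k i j y =
    (if k = V \<and> i = U \<and> j = U then pd U3 H y / 2
     else if k = V \<and> (i = U \<and> j = X1 \<or> i = X1 \<and> j = U) then pd X13 H y / 2
     else if k = V \<and> (i = U \<and> j = X2 \<or> i = X2 \<and> j = U) then pd X23 H y / 2
     else if k = X1 \<and> i = U \<and> j = U then - (pd X13 H y / 2)
     else if k = X2 \<and> i = U \<and> j = U then - (pd X23 H y / 2) else 0)"

lemma chr_ppw: "chr (ppw H) k i j p = ppw_christoffel H k i j (proj3 p)"
  unfolding chr_def ginv_ppw pd_ppw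
  by (cases k; cases i; cases j)
    (simp_all add: sum_UNIV_coord ppw_inverse_def ppw_christoffel_def base_coord_def)

definition ricci_uu :: "(real^coord3 \<Rightarrow> real) \<Rightarrow> real^coord3 \<Rightarrow> real" where
  "ricci_uu H y = - (pd X13 (pd X13 H) y + pd X23 (pd X23 H) y) / 2"

lemma ricci_ppw:
  assumes "pd X13 H differentiable (at (proj3 q))" "pd X23 H differentiable (at (proj3 q))"
    and "pd U3 H differentiable (at (proj3 q))"
  shows "ricci (ppw H) i j q = (if i = U \<and> j = U then ricci_uu H (proj3 q) else 0)"
proof -
  have chr: "chr (ppw H) k i j = (\<lambda>p. ppw_christoffel H k i j (proj3 p))" for k i j
    by (simp add: fun_eq_iff chr_ppw)
  have pd_half: "pd l (\<lambda>y. pd x H y / 2) (proj3 q) = pd l (pd x H) (proj3 q) / 2"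
    and pd_neg_half: "pd l (\<lambda>y. - (pd x H y / 2)) (proj3 q) = - (pd l (pd x H) (proj3 q) / 2)"
    if "x \<in> {U3, X13, X23}" for l x
    using that assms pd_cmult[of "pd x H" "proj3 q" l "1/2"] pd_cmult[of "pd x H" "proj3 q" l "-1/2"]
    by auto
  show ?thesis
    unfolding ricci_def chr pd_comp_proj3
    by (cases i; cases j)
      (simp_all add: sum_UNIV_coord ppw_christoffel_def[abs_def] base_coord_def pd_half pd_neg_half ricci_uu_def)
qed

lemma grad_ppw:
  "grad (ppw H) f y = (\<chi> k. if k = U then pd V f y
     else if k = V then pd U f y - H (proj3 y) * pd V f y else pd k f y)"
  unfolding grad_def ginv_ppw
  by (auto simp: vec_eq_iff matrix_vector_mult_def sum_UNIV_coord ppw_inverse_def) (metis coord.exhaust)+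

lemma gval_grad_ppw:
  "gval (ppw H) y (grad (ppw H) f y) (grad (ppw H) f y)
     = 2 * pd U f y * pd V f y - H (proj3 y) * (pd V f y)\<^sup>2 + (pd X1 f y)\<^sup>2 + (pd X2 f y)\<^sup>2"
  unfolding gval_def grad_ppw by (simp add: sum_UNIV_coord ppw_def power2_eq_square algebra_simps)

locale pp_wave =
  fixes H :: "real^coord3 \<Rightarrow> real" and D :: "(real^coord3) set"
  assumes open_D: "open D" and smooth_H: "Cinf_on D H"
begin

abbreviation \<Omega> :: "(real^coord) set" where "\<Omega> \<equiv> {p. proj3 p \<in> D}"

lemma open_\<Omega>: "open \<Omega>"
  using open_proj3_vimage[OF open_D] .

lemma differentiable_pds_H: "y \<in> D \<Longrightarrow> pds is H differentiable (at y)"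
  using Cinf_on_differentiable_at[OF open_D smooth_H] .

lemma differentiable_ricci_uu: "y \<in> D \<Longrightarrow> ricci_uu H differentiable (at y)"
  unfolding ricci_uu_def[abs_def]
  using differentiable_pds_H[of y "[X13, X13]"] differentiable_pds_H[of y "[X23, X23]"]
  by (auto intro!: derivative_intros)

lemma continuous_on_ricci_uu: "continuous_on D (ricci_uu H)"
  using differentiable_ricci_uu
  by (intro continuous_at_imp_continuous_on ballI differentiable_imp_continuous_within) auto

lemma ricci: "q \<in> \<Omega> \<Longrightarrow> ricci (ppw H) i j q = (if i = U \<and> j = U then ricci_uu H (proj3 q) else 0)"
  using differentiable_pds_H[of "proj3 q" "[X13]"] differentiable_pds_H[of "proj3 q" "[X23]"]
    differentiable_pds_H[of "proj3 q" "[U3]"]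
  by (intro ricci_ppw) auto

lemma scal: "q \<in> \<Omega> \<Longrightarrow> scal (ppw H) q = 0"
  unfolding scal_def ginv_ppw by (simp add: ricci sum_UNIV_coord ppw_inverse_def)

lemma pd_scal: "q \<in> \<Omega> \<Longrightarrow> pd i (scal (ppw H)) q = 0"
  using pd_cong_open[OF open_\<Omega>, of q "scal (ppw H)" "\<lambda>_. 0" i] scal by simp

lemma pd_ricci:
  "q \<in> \<Omega> \<Longrightarrow> pd k (ricci (ppw H) i j) q
     = (if i = U \<and> j = U then pd k (\<lambda>p. ricci_uu H (proj3 p)) q else 0)"
  using pd_cong_open[OF open_\<Omega>, of q "ricci (ppw H) i j"
      "\<lambda>p. if i = U \<and> j = U then ricci_uu H (proj3 p) else 0" k]
  by (cases "i = U \<and> j = U") (auto simp: ricci)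

lemma divW:
  assumes "q \<in> \<Omega>"
  shows "divW (ppw H) i j k q =
    - ((if j = U \<and> k = U then pd i (\<lambda>p. ricci_uu H (proj3 p)) q else 0)
      - (if i = U \<and> k = U then pd j (\<lambda>p. ricci_uu H (proj3 p)) q else 0)) / 2"
  unfolding divW_def cov_ricci_def
  using assms
  by (simp add: pd_ricci pd_scal ricci chr_ppw sum_UNIV_coord ppw_christoffel_def pd_comp_proj3)

lemma harmonic_weyl_iff:
  "harmonic_weyl (ppw H) \<Omega> \<longleftrightarrow> (\<forall>y\<in>D. pd X13 (ricci_uu H) y = 0 \<and> pd X23 (ricci_uu H) y = 0)"
proof
  assume harmonic: "harmonic_weyl (ppw H) \<Omega>"
  show "\<forall>y\<in>D. pd X13 (ricci_uu H) y = 0 \<and> pd X23 (ricci_uu H) y = 0"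
  proof
    fix y assume "y \<in> D"
    obtain q where q: "proj3 q = y" using proj3_surj by (metis surjD)
    then have "q \<in> \<Omega>" using \<open>y \<in> D\<close> by simp
    then have "divW (ppw H) X1 U U q = 0" "divW (ppw H) X2 U U q = 0"
      using harmonic unfolding harmonic_weyl_def by auto
    then show "pd X13 (ricci_uu H) y = 0 \<and> pd X23 (ricci_uu H) y = 0"
      using \<open>q \<in> \<Omega>\<close> q by (simp add: divW pd_comp_proj3 base_coord_def)
  qed
next
  assume "\<forall>y\<in>D. pd X13 (ricci_uu H) y = 0 \<and> pd X23 (ricci_uu H) y = 0"
  then have "pd l (\<lambda>p. ricci_uu H (proj3 p)) q = 0" if "q \<in> \<Omega>" "l \<noteq> U" for q l
    using that by (cases l) (auto simp: pd_comp_proj3 base_coord_def)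
  then show "harmonic_weyl (ppw H) \<Omega>"
    unfolding harmonic_weyl_def by (auto simp: divW)
qed

end

section \<open>Necessity: isotropic quasi-Einstein potentials\<close>

definition transverse :: "coord \<Rightarrow> bool" where
  "transverse x \<longleftrightarrow> x = X1 \<or> x = X2"

lemma transverse_simps [simp]: "transverse X1" "transverse X2" "\<not> transverse U" "\<not> transverse V"
  by (simp_all add: transverse_def)

locale isotropic_qe_solution = pp_wave +
  fixes W :: "(real^coord) set" and f :: "real^coord \<Rightarrow> real" and lam :: "real^coord \<Rightarrow> real"
  assumes open_W: "open W" and W_subset: "W \<subseteq> \<Omega>" and smooth_f: "Cinf_on W f"
    and grad_nonzero: "\<And>q. q \<in> W \<Longrightarrow> grad (ppw H) f q \<noteq> 0"
    and grad_null: "\<And>q. q \<in> W \<Longrightarrow> gval (ppw H) q (grad (ppw H) f q) (grad (ppw H) f q) = 0"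
    and quasi_einstein: "\<And>q i j. q \<in> W \<Longrightarrow>
      hess (ppw H) f i j q + ricci (ppw H) i j q + (1/2) * pd i f q * pd j f q = lam q * ppw H q $ i $ j"
begin

lemma differentiable_pds_f: "y \<in> W \<Longrightarrow> pds is f differentiable (at y)"
  using Cinf_on_differentiable_at[OF open_W smooth_f] .

lemma has_derivative_pd_f:
  "y \<in> W \<Longrightarrow> (pd k f has_derivative (\<lambda>h. \<Sum>i\<in>UNIV. h $ i * pd i (pd k f) y)) (at y)"
  using differentiable_pds_f[of y "[k]"] by (simp add: has_derivative_partials)

lemma hessian_f:
  "y \<in> W \<Longrightarrow> pd i (pd j f) y = lam y * ppw H y $ i $ j - ricci (ppw H) i j y
     - pd i f y * pd j f y / 2 + (\<Sum>k\<in>UNIV. ppw_christoffel H k i j (proj3 y) * pd k f y)"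
  using quasi_einstein[of y i j] unfolding hess_def chr_ppw by simp

context
  fixes y assumes y: "y \<in> W"
begin

lemma hessian_f_V:
  "pd V (pd j f) y = lam y * ppw H y $ V $ j - pd V f y * pd j f y / 2"
  "pd j (pd V f) y = lam y * ppw H y $ j $ V - pd j f y * pd V f y / 2"
  using hessian_f[OF y, of V j] hessian_f[OF y, of j V] ricci[of y] y W_subset
  by (cases j; force simp: sum_UNIV_coord ppw_christoffel_def)+

lemma hessian_f_transverse:
  "transverse x \<Longrightarrow> transverse x' \<Longrightarrow>
     pd x (pd x' f) y = lam y * ppw H y $ x $ x' - pd x f y * pd x' f y / 2"
  using hessian_f[OF y, of x x'] ricci[of y] y W_subset
  by (auto simp: transverse_def sum_UNIV_coord ppw_christoffel_def)

lemma hessian_f_U_transverse: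
  assumes "transverse x"
  shows "pd U (pd x f) y = pd (base_coord x) H (proj3 y) * pd V f y / 2 - pd U f y * pd x f y / 2"
    and "pd x (pd U f) y = pd (base_coord x) H (proj3 y) * pd V f y / 2 - pd U f y * pd x f y / 2"
  using hessian_f[OF y, of U x] hessian_f[OF y, of x U] ricci[of y] y W_subset assms
  by (auto simp: transverse_def sum_UNIV_coord ppw_christoffel_def ppw_def base_coord_def)

lemma hessian_f_UU:
  "pd U (pd U f) y = lam y * H (proj3 y) + pd U3 H (proj3 y) * pd V f y / 2
     - pd X13 H (proj3 y) * pd X1 f y / 2 - pd X23 H (proj3 y) * pd X2 f y / 2
     - ricci_uu H (proj3 y) - (pd U f y)\<^sup>2 / 2"
  using hessian_f[OF y, of U U] ricci[of y] y W_subset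
  by (auto simp: sum_UNIV_coord ppw_christoffel_def ppw_def power2_eq_square)

end

definition null_norm :: "real^coord \<Rightarrow> real" where
  "null_norm y = 2 * pd U f y * pd V f y - H (proj3 y) * (pd V f y)\<^sup>2 + (pd X1 f y)\<^sup>2 + (pd X2 f y)\<^sup>2"

lemma null_norm_eq_0: "y \<in> W \<Longrightarrow> null_norm y = 0"
  using grad_null gval_grad_ppw by (simp add: null_norm_def)

lemma pd_f_nonzero:
  assumes "y \<in> W" shows "\<exists>i. pd i f y \<noteq> 0"
proof (rule ccontr)
  assume "\<nexists>i. pd i f y \<noteq> 0"
  then have "grad (ppw H) f y = 0" by (simp add: grad_ppw vec_eq_iff)
  then show False using grad_nonzero[OF assms] by simp
qed

lemma pd_null_norm:
  assumes y: "y \<in> W"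
  shows "pd c null_norm y = 2 * pd c (pd U f) y * pd V f y + 2 * pd U f y * pd c (pd V f) y
     - pd c (\<lambda>y. H (proj3 y)) y * (pd V f y)\<^sup>2 - 2 * H (proj3 y) * pd V f y * pd c (pd V f) y
     + 2 * pd X1 f y * pd c (pd X1 f) y + 2 * pd X2 f y * pd c (pd X2 f) y"
proof -
  have "proj3 y \<in> D" using y W_subset by auto
  then have dH: "((\<lambda>y. H (proj3 y)) has_derivative (\<lambda>h. \<Sum>i\<in>UNIV. h $ i * pd i (\<lambda>y. H (proj3 y)) y)) (at y)"
    using has_derivative_comp_proj3 differentiable_pds_H[of _ "[]"] by simp
  show ?thesis
    unfolding null_norm_def[abs_def]
    by (rule trans[OF pd_eq_derivative], (rule derivative_eq_intros has_derivative_pd_f[OF y] dH refl)+)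
      (simp add: power2_eq_square algebra_simps)
qed

text \<open>Differentiating the null condition along the four coordinate directions and inserting the
  quasi-Einstein equation gives linear relations that force \<open>\<lambda> = 0\<close>.\<close>
lemma lam_relations:
  assumes y: "y \<in> W"
  shows "lam y * pd V f y = 0" "transverse x \<Longrightarrow> lam y * pd x f y = 0"
    "lam y * pd U f y = ricci_uu H (proj3 y) * pd V f y"
proof -
  have "pd c null_norm y = 0" for c
    using pd_cong_open[OF open_W y, of null_norm "\<lambda>_. 0"] null_norm_eq_0 by simp
  note pd0 = this and N = null_norm_eq_0[OF y]
  note hess = hessian_f_V[OF y] hessian_f_transverse[OF y] hessian_f_U_transverse[OF y] hessian_f_UU[OF y]
  have "pd V null_norm y = 2 * lam y * pd V f y - pd V f y * null_norm y"
    by (simp add: pd_null_norm[OF y] hess pd_comp_proj3 null_norm_def ppw_def power2_eq_square algebra_simps)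
  then show "lam y * pd V f y = 0" using N pd0 by simp
  show "lam y * pd x f y = 0" if "transverse x"
  proof -
    have "pd x null_norm y = 2 * lam y * pd x f y - pd x f y * null_norm y"
      using that
      by (auto simp: transverse_def pd_null_norm[OF y] hess pd_comp_proj3 base_coord_def null_norm_def
          ppw_def power2_eq_square algebra_simps)
    then show ?thesis using N pd0 by simp
  qed
  have "pd U null_norm y = 2 * lam y * pd U f y - 2 * ricci_uu H (proj3 y) * pd V f y - pd U f y * null_norm y"
    by (simp add: pd_null_norm[OF y] hess pd_comp_proj3 base_coord_def null_norm_def ppw_def
        power2_eq_square field_simps)
  then show "lam y * pd U f y = ricci_uu H (proj3 y) * pd V f y" using N pd0 by simp
qed

lemma lam_eq_0: "y \<in> W \<Longrightarrow> lam y = 0"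
  using lam_relations[of y] pd_f_nonzero[of y]
  by (metis coord.exhaust mult_eq_0_iff transverse_simps(1,2))

lemma ricci_uu_mult_pd_V_eq_0: "y \<in> W \<Longrightarrow> ricci_uu H (proj3 y) * pd V f y = 0"
  using lam_relations(3)[of y] lam_eq_0[of y] by simp

lemma pd_transverse_ricci_uu_if_pd_V_nonzero:
  assumes q: "q \<in> W" and x: "transverse x" and fV: "pd V f q \<noteq> 0"
  shows "pd (base_coord x) (ricci_uu H) (proj3 q) = 0"
proof -
  have "proj3 q \<in> D" using q W_subset by auto
  note dR = has_derivative_comp_proj3[OF differentiable_ricci_uu[OF this]]
  define P where "P y = ricci_uu H (proj3 y) * pd V f y" for y
  have "pd x P q = 0"
    using pd_cong_open[OF open_W q, of P "\<lambda>_. 0" x] ricci_uu_mult_pd_V_eq_0 by (simp add: P_def)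
  moreover have "pd x P q = pd (base_coord x) (ricci_uu H) (proj3 q) * pd V f q
      + ricci_uu H (proj3 q) * pd x (pd V f) q"
    unfolding P_def[abs_def]
    by (rule trans[OF pd_eq_derivative], (rule derivative_eq_intros has_derivative_pd_f[OF q] dR refl)+)
      (use x in \<open>auto simp: pd_comp_proj3 transverse_def\<close>)
  moreover have "ricci_uu H (proj3 q) = 0" using ricci_uu_mult_pd_V_eq_0[OF q] fV by simp
  ultimately show ?thesis using fV by simp
qed

lemma pd_transverse_f_if_pd_V_zero:
  assumes q: "q \<in> W" and x: "transverse x" and fV: "pd V f q = 0"
  shows "pd x f q = 0"
proof -
  have "(pd X1 f q)\<^sup>2 + (pd X2 f q)\<^sup>2 = 0" using null_norm_eq_0[OF q] fV by (simp add: null_norm_def)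
  then show ?thesis using x by (auto simp: transverse_def sum_power2_eq_zero_iff)
qed

lemma has_derivative_pd_H_comp_proj3:
  "q \<in> W \<Longrightarrow> ((\<lambda>y. pd c H (proj3 y)) has_derivative
     (\<lambda>h. \<Sum>i\<in>UNIV. h $ i * pd i (\<lambda>y. pd c H (proj3 y)) q)) (at q)"
  using has_derivative_comp_proj3 differentiable_pds_H[of "proj3 q" "[c]"] W_subset by auto

lemma pd_transverse_pd_UU_f_if_pd_V_zero:
  assumes q: "q \<in> W" and x: "transverse x" and fV: "pd V f q = 0"
  shows "pd x (pd U (pd U f)) q = - pd (base_coord x) (ricci_uu H) (proj3 q)"
proof -
  define Q where "Q y = (1/2) * pd U3 H (proj3 y) * pd V f y - (1/2) * pd X13 H (proj3 y) * pd X1 f y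
      - (1/2) * pd X23 H (proj3 y) * pd X2 f y - ricci_uu H (proj3 y) - (1/2) * (pd U f y)\<^sup>2" for y
  have "proj3 q \<in> D" using q W_subset by auto
  note dR = has_derivative_comp_proj3[OF differentiable_ricci_uu[OF this]]
  note dH = has_derivative_pd_H_comp_proj3[OF q]
  have "x \<noteq> U" "x \<noteq> V" using x by (auto simp: transverse_def)
  note hess = hessian_f_V[OF q] hessian_f_transverse[OF q] hessian_f_U_transverse[OF q x]
    lam_eq_0[OF q] fV pd_transverse_f_if_pd_V_zero[OF q _ fV] x \<open>x \<noteq> U\<close> \<open>x \<noteq> V\<close>
  have "pd x (pd U (pd U f)) q = pd x Q q"
    using pd_cong_open[OF open_W q, of "pd U (pd U f)" Q x] hessian_f_UU lam_eq_0
    by (simp add: Q_def)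
  also have "\<dots> = - pd (base_coord x) (ricci_uu H) (proj3 q)"
    unfolding Q_def[abs_def]
    by (rule trans[OF pd_eq_derivative], (rule derivative_eq_intros has_derivative_pd_f[OF q] dH dR refl)+)
      (simp add: hess pd_comp_proj3 ppw_def)
  finally show ?thesis .
qed

lemma pd_U_pd_transverse_pd_U_f_if_pd_V_zero:
  assumes q: "q \<in> W" and x: "transverse x" and fV: "pd V f q = 0"
  shows "pd U (pd x (pd U f)) q = 0"
proof -
  define Q where "Q y = (1/2) * pd (base_coord x) H (proj3 y) * pd V f y - (1/2) * pd U f y * pd x f y" for y
  note dH = has_derivative_pd_H_comp_proj3[OF q]
  note hess = hessian_f_V[OF q] hessian_f_U_transverse[OF q x] lam_eq_0[OF q] fV
    pd_transverse_f_if_pd_V_zero[OF q x fV]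
  have "pd U (pd x (pd U f)) q = pd U Q q"
    using pd_cong_open[OF open_W q, of "pd x (pd U f)" Q U] hessian_f_U_transverse(2)[OF _ x]
    by (simp add: Q_def)
  also have "\<dots> = 0"
    unfolding Q_def[abs_def]
    by (rule trans[OF pd_eq_derivative], (rule derivative_eq_intros has_derivative_pd_f[OF q] dH refl)+)
      (simp add: hess ppw_def)
  finally show ?thesis .
qed

text \<open>Where \<open>\<partial>\<^sub>v f = 0\<close>, the null condition kills the transverse gradient of f, and the third
  derivatives \<open>\<partial>\<^sub>x\<partial>\<^sub>u\<partial>\<^sub>u f\<close> and \<open>\<partial>\<^sub>u\<partial>\<^sub>x\<partial>\<^sub>u f\<close> read off from the quasi-Einstein equation are
  \<open>-\<partial>\<^sub>x \<rho>\<^sub>u\<^sub>u\<close> and 0; Schwarz's theorem makes them equal.\<close>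
lemma pd_transverse_ricci_uu_if_pd_V_zero:
  assumes q: "q \<in> W" and x: "transverse x" and fV: "pd V f q = 0"
  shows "pd (base_coord x) (ricci_uu H) (proj3 q) = 0"
proof -
  have "pd x (pd U (pd U f)) q = pd U (pd x (pd U f)) q"
    by (rule pd_commute[OF open_W q])
      (use differentiable_pds_f[of _ "[U]"] differentiable_pds_f[OF q, of "[U, U]"]
         differentiable_pds_f[OF q, of "[x, U]"] in simp_all)
  then show ?thesis
    using pd_transverse_pd_UU_f_if_pd_V_zero[OF assms] pd_U_pd_transverse_pd_U_f_if_pd_V_zero[OF assms]
    by simp
qed

lemma pd_transverse_ricci_uu_eq_0:
  "q \<in> W \<Longrightarrow> transverse x \<Longrightarrow> pd (base_coord x) (ricci_uu H) (proj3 q) = 0"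
  using pd_transverse_ricci_uu_if_pd_V_nonzero pd_transverse_ricci_uu_if_pd_V_zero by blast

end

lemma (in pp_wave) harmonic_weyl_if_iso_conf_einstein:
  assumes "loc_iso_conf_einstein (ppw H) \<Omega>"
  shows "harmonic_weyl (ppw H) \<Omega>"
  unfolding harmonic_weyl_iff
proof
  fix y assume "y \<in> D"
  obtain q where q: "proj3 q = y" using proj3_surj by (metis surjD)
  then have "q \<in> \<Omega>" using \<open>y \<in> D\<close> by simp
  then obtain W f lam where "open W" "q \<in> W" "W \<subseteq> \<Omega>" "Cinf_on W f"
    and "\<forall>q\<in>W. grad (ppw H) f q \<noteq> 0 \<and> gval (ppw H) q (grad (ppw H) f q) (grad (ppw H) f q) = 0 \<and>
          (\<forall>i j. hess (ppw H) f i j q + ricci (ppw H) i j q + (1/2) * pd i f q * pd j f q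
                 = lam q * ppw H q $ i $ j)"
    using bspec[OF assms[unfolded loc_iso_conf_einstein_def] \<open>q \<in> \<Omega>\<close>] by auto
  then interpret isotropic_qe_solution H D W f lam
    by unfold_locales auto
  show "pd X13 (ricci_uu H) y = 0 \<and> pd X23 (ricci_uu H) y = 0"
    using pd_transverse_ricci_uu_eq_0[OF \<open>q \<in> W\<close>, of X1] pd_transverse_ricci_uu_eq_0[OF \<open>q \<in> W\<close>, of X2] q
    by (simp add: base_coord_def)
qed

section \<open>Sufficiency\<close>

lemma exists_small_linear_ode:
  assumes "0 < r" "continuous_on {u0 - r..u0 + r} b"
  obtains a c B where "a < u0" "u0 < c" "{a..c} \<subseteq> {u0 - r..u0 + r}" "small_linear_ode a c B b"
proof -
  obtain B where B: "B \<ge> 0" "\<And>u. u \<in> {u0 - r..u0 + r} \<Longrightarrow> \<bar>b u\<bar> \<le> B"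
    using continuous_on_compact_bound[OF compact_Icc assms(2)] by auto
  define h where "h = min r (1 / (4 * (B + 1)))"
  have "1 / (4 * (B + 1)) \<le> 1" using B(1) by (simp add: field_simps)
  then have h: "0 < h" "h \<le> r" "h \<le> 1" using assms(1) B(1) by (auto simp: h_def min_le_iff_disj)
  have "B * h \<le> B * (1 / (4 * (B + 1)))" using B(1) by (intro mult_left_mono) (auto simp: h_def)
  also have "\<dots> \<le> 1/4" using B(1) by (simp add: field_simps)
  finally have Bh: "B * h \<le> 1/4" .
  have sub: "{u0 - h/2..u0 + h/2} \<subseteq> {u0 - r..u0 + r}" using h by auto
  show thesis
  proof (rule that[of "u0 - h/2" "u0 + h/2" B])
    show "small_linear_ode (u0 - h/2) (u0 + h/2) B b"
      using h Bh B sub continuous_on_subset[OF assms(2) sub] by unfold_locales auto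
  qed (use h sub in auto)
qed

context pp_wave
begin

lemma ricci_uu_eq_along_u:
  assumes harmonic: "\<forall>y\<in>D. pd X13 (ricci_uu H) y = 0 \<and> pd X23 (ricci_uu H) y = 0"
    and "ball y0 r \<subseteq> D" and z: "z \<in> ball y0 r"
  shows "ricci_uu H z = ricci_uu H (y0 + (z $ U3 - y0 $ U3) *\<^sub>R axis U3 1)"
proof -
  define e where "e = y0 + (z $ U3 - y0 $ U3) *\<^sub>R axis U3 1"
  define d where "d = z - e"
  have dU: "d $ U3 = 0" by (simp add: d_def e_def axis_def)
  have "norm (e - y0) = \<bar>(z - y0) $ U3\<bar>" by (simp add: e_def)
  also have "\<dots> \<le> norm (z - y0)" by (rule component_le_norm_cart)
  finally have e: "e \<in> ball y0 r" using z by (simp add: dist_norm norm_minus_commute)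
  have segment: "e + s *\<^sub>R d \<in> D" if "0 \<le> s" "s \<le> 1" for s
  proof -
    have "e + s *\<^sub>R d = (1 - s) *\<^sub>R e + s *\<^sub>R z" by (simp add: d_def algebra_simps)
    then show ?thesis using convexD[OF convex_ball e z, of "1 - s" s] that assms(2) by auto
  qed
  have "((\<lambda>s. ricci_uu H (e + s *\<^sub>R d)) has_real_derivative 0) (at s)" if "0 \<le> s" "s \<le> 1" for s
    using has_real_derivative_along[OF differentiable_ricci_uu[OF segment[OF that]]]
      harmonic segment[OF that] dU
    by (simp add: UNIV_coord3)
  then obtain \<xi> where "ricci_uu H (e + 1 *\<^sub>R d) - ricci_uu H (e + 0 *\<^sub>R d) = (1 - 0) * 0"
    using MVT2[of 0 1 "\<lambda>s. ricci_uu H (e + s *\<^sub>R d)" "\<lambda>_. 0"] by auto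
  then show ?thesis by (simp add: d_def e_def)
qed

text \<open>A null potential depending on u alone: \<open>f = F(u)\<close> has \<open>Hes\<^sub>f = F'' du\<^sup>2\<close> and \<open>\<nabla>f = F' \<partial>\<^sub>v\<close>,
  so the quasi-Einstein equation with \<open>\<lambda> = 0\<close> reduces to \<open>F'' + \<rho>\<^sub>u\<^sub>u + F'\<^sup>2/2 = 0\<close>.\<close>
lemma iso_conf_einstein_potential_of_u:
  assumes "open W" "p \<in> W" "W \<subseteq> \<Omega>" "\<And>q. q \<in> W \<Longrightarrow> q $ U \<in> I" "smooth_on I F"
    and F'_nonzero: "\<And>q. q \<in> W \<Longrightarrow> deriv F (q $ U) \<noteq> 0"
    and riccati: "\<And>q. q \<in> W \<Longrightarrow>
      deriv (deriv F) (q $ U) + ricci_uu H (proj3 q) + (deriv F (q $ U))\<^sup>2 / 2 = 0"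
  shows "\<exists>W f lam. open W \<and> p \<in> W \<and> W \<subseteq> \<Omega> \<and> Cinf_on W f \<and>
       (\<forall>q\<in>W. grad (ppw H) f q \<noteq> 0 \<and> gval (ppw H) q (grad (ppw H) f q) (grad (ppw H) f q) = 0 \<and>
          (\<forall>i j. hess (ppw H) f i j q + ricci (ppw H) i j q + (1/2) * pd i f q * pd j f q
                 = lam q * ppw H q $ i $ j))"
proof (intro exI conjI ballI allI)
  define f where "f q = F (q $ U)" for q
  have pd_f: "pd k f = (\<lambda>q. if k = U then deriv F (q $ U) else 0)" for k
    by (simp add: fun_eq_iff f_def[abs_def] pd_comp_nth)
  show "open W" "p \<in> W" "W \<subseteq> \<Omega>" by (fact assms)+
  show "Cinf_on W f" unfolding f_def[abs_def] by (rule Cinf_on_comp_nth[OF assms(4,5)])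
  fix q assume q: "q \<in> W"
  then have "q \<in> \<Omega>" using assms(3) by auto
  show "grad (ppw H) f q \<noteq> 0"
    using F'_nonzero[OF q] by (auto simp: grad_ppw pd_f vec_eq_iff)
  show "gval (ppw H) q (grad (ppw H) f q) (grad (ppw H) f q) = 0"
    by (simp add: gval_grad_ppw pd_f)
  fix i j
  show "hess (ppw H) f i j q + ricci (ppw H) i j q + (1/2) * pd i f q * pd j f q
      = (\<lambda>_. 0) q * ppw H q $ i $ j"
    unfolding hess_def chr_ppw
    using riccati[OF q] \<open>q \<in> \<Omega>\<close>
    by (cases i; cases j) (auto simp: ricci pd_f pd_comp_nth sum_UNIV_coord ppw_christoffel_def power2_eq_square)
qed

lemma riccati_solution_along_u:
  assumes "0 < r" "ball y0 r \<subseteq> D"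
  obtains a c F where "a < y0 $ U3" "y0 $ U3 < c" "smooth_on {a<..<c} F"
    "\<And>t. t \<in> {a<..<c} \<Longrightarrow> deriv F t \<noteq> 0"
    "\<And>t. t \<in> {a<..<c} \<Longrightarrow>
       deriv (deriv F) t + ricci_uu H (y0 + (t - y0 $ U3) *\<^sub>R axis U3 1) + (deriv F t)\<^sup>2 / 2 = 0"
proof -
  define u0 where "u0 = y0 $ U3"
  define e where "e u = (y0 - u0 *\<^sub>R axis U3 1) + u *\<^sub>R axis U3 1" for u
  have e_alt: "e u = y0 + (u - u0) *\<^sub>R axis U3 1" for u
    by (simp add: e_def scaleR_diff_left algebra_simps)
  have e_in_D: "e u \<in> D" if "\<bar>u - u0\<bar> < r" for u
    using that assms(2) by (auto simp: e_alt dist_norm)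
  \<comment> \<open>written with \<open>pds\<close> so that \<open>smooth_on_along_axis\<close> applies\<close>
  define b where "b u = (1/4) * (pds [X13, X13] H (e u) + pds [X23, X23] H (e u))" for u
  have b_ricci: "b u = - ricci_uu H (e u) / 2" for u by (simp add: b_def ricci_uu_def field_simps)
  have "continuous_on {u0 - r/2..u0 + r/2} (\<lambda>u. ricci_uu H (e u))"
    using assms(1) e_in_D unfolding e_def
    by (intro continuous_on_compose2[OF continuous_on_ricci_uu] continuous_intros) auto
  then have "continuous_on {u0 - r/2..u0 + r/2} b"
    unfolding b_ricci[abs_def] by (intro continuous_intros) auto
  then obtain a c B where ac: "a < u0" "u0 < c" "{a..c} \<subseteq> {u0 - r/2..u0 + r/2}"
    and ode: "small_linear_ode a c B b"
    using exists_small_linear_ode[of "r/2" u0 b] assms(1) by auto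
  have "e u \<in> D" if "u \<in> {a<..<c}" for u
    using that ac assms(1) by (intro e_in_D) auto
  then have "smooth_on {a<..<c} (\<lambda>u. pds js H (e u))" for js
    unfolding e_def by (rule smooth_on_along_axis[OF open_D smooth_H])
  then have "smooth_on {a<..<c} b"
    unfolding smooth_on_def b_def[abs_def]
    by (intro allI smooth_upto_mult smooth_upto_add smooth_upto_const open_greaterThanLessThan) blast+
  then obtain F where F: "smooth_on {a<..<c} F" "\<And>t. t \<in> {a<..<c} \<Longrightarrow> deriv F t \<noteq> 0"
    and riccati: "\<And>t. t \<in> {a<..<c} \<Longrightarrow> deriv (deriv F) t + (deriv F t)\<^sup>2 / 2 = 2 * b t"
    using small_linear_ode.riccati_solution_exists[OF ode] by blast
  show ?thesis
  proof (rule that[OF _ _ F])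
    show "a < y0 $ U3" "y0 $ U3 < c" using ac by (simp_all add: u0_def)
    fix t assume "t \<in> {a<..<c}"
    then show "deriv (deriv F) t + ricci_uu H (y0 + (t - y0 $ U3) *\<^sub>R axis U3 1) + (deriv F t)\<^sup>2 / 2 = 0"
      using riccati[of t] by (simp add: b_ricci e_alt u0_def)
  qed
qed

lemma iso_conf_einstein_if_harmonic:
  assumes harmonic: "\<forall>y\<in>D. pd X13 (ricci_uu H) y = 0 \<and> pd X23 (ricci_uu H) y = 0"
  shows "loc_iso_conf_einstein (ppw H) \<Omega>"
  unfolding loc_iso_conf_einstein_def
proof
  fix p assume "p \<in> \<Omega>"
  define y0 where "y0 = proj3 p"
  have "y0 \<in> D" using \<open>p \<in> \<Omega>\<close> by (simp add: y0_def)
  then obtain r where r: "r > 0" "ball y0 r \<subseteq> D"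
    using open_D open_contains_ball by blast
  obtain a c F where ac: "a < y0 $ U3" "y0 $ U3 < c" and F: "smooth_on {a<..<c} F"
    "\<And>t. t \<in> {a<..<c} \<Longrightarrow> deriv F t \<noteq> 0"
    "\<And>t. t \<in> {a<..<c} \<Longrightarrow>
       deriv (deriv F) t + ricci_uu H (y0 + (t - y0 $ U3) *\<^sub>R axis U3 1) + (deriv F t)\<^sup>2 / 2 = 0"
    using riccati_solution_along_u[OF r] by blast
  define W where "W = {q. proj3 q \<in> ball y0 r} \<inter> {q. q $ U \<in> {a<..<c}}"
  have "open W"
    unfolding W_def using open_proj3_vimage[OF open_ball] open_vimage_vec_nth[OF open_greaterThanLessThan]
    by (intro open_Int) (auto simp: vimage_def)
  moreover have "p \<in> W" using ac r(1) by (simp add: W_def y0_def proj3_def)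
  moreover have "W \<subseteq> \<Omega>" using r(2) by (auto simp: W_def)
  moreover have "deriv (deriv F) (q $ U) + ricci_uu H (proj3 q) + (deriv F (q $ U))\<^sup>2 / 2 = 0"
    if "q \<in> W" for q
  proof -
    have "ricci_uu H (proj3 q) = ricci_uu H (y0 + (q $ U - y0 $ U3) *\<^sub>R axis U3 1)"
      using ricci_uu_eq_along_u[OF harmonic r(2)] that by (simp add: W_def proj3_def)
    then show ?thesis using F(3)[of "q $ U"] that by (simp add: W_def)
  qed
  ultimately show "\<exists>W f lam. open W \<and> p \<in> W \<and> W \<subseteq> \<Omega> \<and> Cinf_on W f \<and>
       (\<forall>q\<in>W. grad (ppw H) f q \<noteq> 0 \<and> gval (ppw H) q (grad (ppw H) f q) (grad (ppw H) f q) = 0 \<and>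
          (\<forall>i j. hess (ppw H) f i j q + ricci (ppw H) i j q + (1/2) * pd i f q * pd j f q
                 = lam q * ppw H q $ i $ j))"
    using F by (intro iso_conf_einstein_potential_of_u[of W p "{a<..<c}" F]) (auto simp: W_def)
qed

end

theorem corollary3p5:
  fixes H :: "real^coord3 \<Rightarrow> real" and D :: "(real^coord3) set"
  assumes "open D" and "Cinf_on D H"
  shows "loc_iso_conf_einstein (ppw H) {p. proj3 p \<in> D} \<longleftrightarrow>
         harmonic_weyl (ppw H) {p. proj3 p \<in> D}"
proof -
  interpret pp_wave H D using assms by unfold_locales
  show ?thesis
    using harmonic_weyl_if_iso_conf_einstein iso_conf_einstein_if_harmonic harmonic_weyl_iff by blast
qed

end
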